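(* Fix a constant $f\in\mathbb{N}$ and let $\ell=f+1$. Consider directed graphs $G=(V,E)$ with $n=|V|\to\infty$, each with a partition $R_1,\dots,R_k$ of $V$, and let $R=\max_{k'\in[k]}|R_{k'}|$ and $r=\min_{k'\in[k]}|R_{k'}|$. Consider the partitioned omission reinforcement (described in the context) under the fault model $\mathrm{Om}(p)$, $p=p(n)$. (i) If $p\in o\big((n/r)^{-1/(f+1)}/R\big)$, the construction is a valid reinforcement for $\mathrm{Om}(p)$, i.e., with probability $1-o(1)$, $A'$ simulates $A$. (ii) If $G$ contains $\Omega(n)$ nodes with non-zero out-degree, $R\in O(1)$, and $p\in\omega(n^{-1/(f+1)})$, the reinforcement is not valid: there exist a scheduling algorithm $A$, inputs and omission behavior such that with probability $1-o(1)$, $A'$ does not simulate $A$.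
   Context: Model: a synchronous network is a directed graph $G=(V,E)$ with $n=|V|$. A scheduling algorithm $A$ assigns a state to each node; in each round each node may receive environment input, decides from its state which message (if any) to send on each outgoing link, and updates its state from messages received on incoming links. Write $[\ell]=\{1,\dots,\ell\}$. Fault model $\mathrm{Om}(p)$: the set $F'$ of faulty nodes of $G'$ is obtained by including each node independently with probability $p$; faulty nodes may only omit sending messages they should send. Partitioned omission reinforcement: $V'=V\times[\ell]$, $v_i=(v,i)$, $P(v_i)=v$. For $e=(v,w)\in E$, $E'_e=\{(v_i,w_i): i\in[\ell]\}$ if $v,w$ are in the same region, and $E'_e=\{(v_i,w_j): i,j\in[\ell]\}$ otherwise; $E'=\bigcup_e E'_e$. Each copy receives the environment input of its original. Algorithm $A'$: each $v'$ initializes local copies of the state of $P(v')$ and sets $\mathit{know}_{v'}=\mathbf{true}$; in each round, on each $(v',w')\in E'$, if $\mathit{know}_{v'}=\mathbf{true}$ it sends the message $P(v')$ would send on $(P(v'),P(w'))$ under $A$, or a symbol $\bot$ if there is none, and sends nothing if $\mathit{know}_{v'}=\mathbf{false}$; if $\mathit{know}_{v'}=\mathbf{true}$ and for every in-neighbor $w$ of $P(v')$ it received a message from some copy of $w$, it updates its state accordingly ($\bot$ meaning no message), and otherwise sets $\mathit{know}_{v'}=\mathbf{false}$. Simulation under $\mathrm{Om}(p)$: for each $v\in V$, some copy $v'$ with $P(v')=v$ computes in each round the state of $v$ under $A$. A reinforcement is valid if $A'$ simulates $A$ with probability $1-o(1)$ as $n\to\infty$. *)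

theory Defs
  imports "HOL-Analysis.Analysis" "HOL-Library.Landau_Symbols" "HOL-Library.Disjoint_Sets"
begin

text \<open>In every round a node first incorporates its environment input,
 then decides from its (new) state which message (if any) to send on each outgoing link
 (identified by its target), and finally updates its state from the messages received on its
 incoming links (indexed by the in-neighbour; None = no message).\<close>
record ('v,'s,'m,'i) alg =
  a_init   :: "'v \<Rightarrow> 's"
  a_input  :: "'v \<Rightarrow> 's \<Rightarrow> 'i \<Rightarrow> 's"
  a_send   :: "'v \<Rightarrow> 's \<Rightarrow> 'v \<Rightarrow> 'm option"
  a_update :: "'v \<Rightarrow> 's \<Rightarrow> ('v \<Rightarrow> 'm option) \<Rightarrow> 's"

text \<open>Fault-free execution of A on the graph with edge set E; env t v is the input of v in
 round t+1; run A E env t v is the state of v after t rounds.\<close>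
primrec run :: "('v,'s,'m,'i) alg \<Rightarrow> ('v \<times> 'v) set \<Rightarrow> (nat \<Rightarrow> 'v \<Rightarrow> 'i) \<Rightarrow> nat \<Rightarrow> 'v \<Rightarrow> 's" where
  "run A E env 0 v = a_init A v"
| "run A E env (Suc t) v =
     (let x = (\<lambda>u. a_input A u (run A E env t u) (env t u))
      in a_update A v (x v) (\<lambda>u. if (u, v) \<in> E then a_send A u (x u) v else None))"

definition graph_part :: "'v set \<Rightarrow> ('v \<times> 'v) set \<Rightarrow> 'v set set \<Rightarrow> bool" where
  "graph_part V E P \<longleftrightarrow> finite V \<and> E \<subseteq> V \<times> V \<and> partition_on V P"

definition max_region :: "'v set set \<Rightarrow> nat" where
  "max_region P = Max (card ` P)"

definition min_region :: "'v set set \<Rightarrow> nat" where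
  "min_region P = Min (card ` P)"

definition same_region :: "'v set set \<Rightarrow> 'v \<Rightarrow> 'v \<Rightarrow> bool" where
  "same_region P v w \<longleftrightarrow> (\<exists>X\<in>P. v \<in> X \<and> w \<in> X)"

definition reinf_edges :: "('v \<times> 'v) set \<Rightarrow> 'v set set \<Rightarrow> nat \<Rightarrow> (('v \<times> nat) \<times> ('v \<times> nat)) set" where
  "reinf_edges E P l = {((v, i), (w, j)) | v w i j. (v, w) \<in> E \<and> i \<in> {1..l} \<and> j \<in> {1..l}
                                              \<and> (same_region P v w \<longrightarrow> i = j)}"

text \<open>Execution of A' on the reinforced graph, with faulty set F and omission behaviour om:
 a faulty copy d omits its message on link (d,c) in round t+1 iff om t d c.
 The state of a copy is (local copy of the state of its original, know flag).
 Messages of A' are of type 'm option, None playing the role of the symbol bot.\<close>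
primrec run' :: "('v,'s,'m,'i) alg \<Rightarrow> ('v \<times> 'v) set \<Rightarrow> 'v set set \<Rightarrow> nat \<Rightarrow> (nat \<Rightarrow> 'v \<Rightarrow> 'i)
                 \<Rightarrow> ('v \<times> nat) set \<Rightarrow> (nat \<Rightarrow> 'v \<times> nat \<Rightarrow> 'v \<times> nat \<Rightarrow> bool)
                 \<Rightarrow> nat \<Rightarrow> 'v \<times> nat \<Rightarrow> 's \<times> bool" where
  "run' A E P l env F om 0 c = (a_init A (fst c), True)"
| "run' A E P l env F om (Suc t) c =
     (let st = (\<lambda>d. run' A E P l env F om t d);
          x = (\<lambda>d. a_input A (fst d) (fst (st d)) (env t (fst d)));
          delivered = (\<lambda>d. (d, c) \<in> reinf_edges E P l \<and> snd (st d) \<and> \<not> (d \<in> F \<and> om t d c));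
          msg = (\<lambda>d. a_send A (fst d) (x d) (fst c))
      in if snd (st c) \<and> (\<forall>u. (u, fst c) \<in> E \<longrightarrow> (\<exists>d. fst d = u \<and> delivered d))
         then (a_update A (fst c) (x c)
                 (\<lambda>u. if (u, fst c) \<in> E then msg (SOME d. fst d = u \<and> delivered d) else None), True)
         else (x c, False))"

definition simulates :: "('v,'s,'m,'i) alg \<Rightarrow> 'v set \<Rightarrow> ('v \<times> 'v) set \<Rightarrow> 'v set set \<Rightarrow> nat
                         \<Rightarrow> (nat \<Rightarrow> 'v \<Rightarrow> 'i) \<Rightarrow> ('v \<times> nat) set
                         \<Rightarrow> (nat \<Rightarrow> 'v \<times> nat \<Rightarrow> 'v \<times> nat \<Rightarrow> bool) \<Rightarrow> bool" where
  "simulates A V E P l env F om \<longleftrightarrow>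
     (\<forall>v\<in>V. \<exists>i\<in>{1..l}. \<forall>t. snd (run' A E P l env F om t (v, i))
                              \<and> fst (run' A E P l env F om t (v, i)) = run A E env t v)"

text \<open>Om(p): probability that the random faulty set F \<subseteq> V', each node included independently
 with probability p, satisfies Q.\<close>
definition om_prob :: "'a set \<Rightarrow> real \<Rightarrow> ('a set \<Rightarrow> bool) \<Rightarrow> real" where
  "om_prob V' p Q = (\<Sum>F\<in>Pow V'. if Q F then p ^ card F * (1 - p) ^ (card V' - card F) else 0)"

end

theory Submission
  imports Defs
begin

text \<open>
  If every region X contains an index i such that all copies in X \<times> {i} are correct, then
  choosing that index for every node of X gives copies that always know: copies in the same
  region share the index and hence an edge, and between regions all copies are connected.
  A region is blocked only if each of the l = f + 1 indices has a faulty copy in it; a union bound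
  over the |X|^l ways of choosing these copies bounds the failure probability by the sum of
  |X|^l p^l over all regions X, which is at most n R^f p^l and vanishes under the hypothesis of (i).
  Conversely, if all copies of a node with an out-neighbour w are faulty and silent, no copy of w
  knows after the first round.  Nodes fail in this way independently with probability p^l, so
  with \<Omega>(n) such nodes simulation fails with probability at least 1 - (1 - p^l)^\<Omega>(n) \<ge>
  1 - exp (- \<Omega>(n p^l)), which tends to 1 when p \<in> \<omega>(n^(-1/l)).
\<close>

lemma om_prob_cong:
  assumes "\<And>F. F \<subseteq> V' \<Longrightarrow> Q F \<longleftrightarrow> Q' F"
  shows "om_prob V' p Q = om_prob V' p Q'"
  unfolding om_prob_def by (rule sum.cong) (auto simp: assms)

lemma om_prob_mono:
  assumes "0 \<le> p" "p \<le> 1" "\<And>F. F \<subseteq> V' \<Longrightarrow> Q F \<Longrightarrow> Q' F"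
  shows "om_prob V' p Q \<le> om_prob V' p Q'"
  unfolding om_prob_def by (intro sum_mono) (use assms in auto)

lemma om_prob_True:
  assumes "finite V'"
  shows "om_prob V' p (\<lambda>_. True) = 1"
proof -
  have "om_prob V' p (\<lambda>_. True) = (\<Sum>F\<in>Pow V'. (\<Prod>x\<in>F. p) * (\<Prod>x\<in>V' - F. 1 - p))"
    unfolding om_prob_def using assms
    by (intro sum.cong) (auto simp: card_Diff_subset finite_subset)
  also have "\<dots> = (\<Prod>x\<in>V'. p + (1 - p))"
    by (rule prod_add[OF assms, symmetric])
  finally show ?thesis by simp
qed

lemma om_prob_le_1: "finite V' \<Longrightarrow> 0 \<le> p \<Longrightarrow> p \<le> 1 \<Longrightarrow> om_prob V' p Q \<le> 1"
  using om_prob_mono[of p V' Q "\<lambda>_. True"] om_prob_True[of V' p] by auto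

lemma om_prob_not:
  assumes "finite V'"
  shows "om_prob V' p (\<lambda>F. \<not> Q F) = 1 - om_prob V' p Q"
proof -
  have "om_prob V' p (\<lambda>F. \<not> Q F) + om_prob V' p Q = om_prob V' p (\<lambda>_. True)"
    unfolding om_prob_def by (subst sum.distrib[symmetric]) (rule sum.cong, auto)
  then show ?thesis using om_prob_True[OF assms] by simp
qed

lemma om_prob_Bex_le:
  assumes "0 \<le> p" "p \<le> 1" "finite J"
  shows "om_prob V' p (\<lambda>F. \<exists>j\<in>J. Q j F) \<le> (\<Sum>j\<in>J. om_prob V' p (Q j))"
  using assms(3)
proof (induction J rule: finite_induct)
  case empty
  then show ?case by (simp add: om_prob_def)
next
  case (insert a J)
  have "om_prob V' p (\<lambda>F. \<exists>j\<in>insert a J. Q j F) \<le> om_prob V' p (Q a) + om_prob V' p (\<lambda>F. \<exists>j\<in>J. Q j F)"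
    unfolding om_prob_def by (subst sum.distrib[symmetric], intro sum_mono) (use assms in auto)
  with insert show ?case by simp
qed

lemma om_prob_Un_disjoint:
  assumes "finite A" "finite B" "A \<inter> B = {}"
  shows "om_prob (A \<union> B) p (\<lambda>F. Q1 (F \<inter> A) \<and> Q2 (F \<inter> B)) = om_prob A p Q1 * om_prob B p Q2"
proof -
  let ?w = "\<lambda>S F. p ^ card F * (1 - p) ^ (card S - card F)"
  have w: "?w (A \<union> B) (F1 \<union> F2) = ?w A F1 * ?w B F2" if "F1 \<subseteq> A" "F2 \<subseteq> B" for F1 F2
  proof -
    have "finite F1" "finite F2" "F1 \<inter> F2 = {}" "card F1 \<le> card A" "card F2 \<le> card B"
      using that assms by (auto intro: finite_subset card_mono)
    with assms have "card (F1 \<union> F2) = card F1 + card F2"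
      "card (A \<union> B) - card (F1 \<union> F2) = (card A - card F1) + (card B - card F2)"
      by (simp_all add: card_Un_disjoint)
    then show ?thesis by (simp add: power_add mult_ac)
  qed
  have bij: "bij_betw (\<lambda>(F1, F2). F1 \<union> F2) (Pow A \<times> Pow B) (Pow (A \<union> B))"
    by (rule bij_betw_byWitness[where f'="\<lambda>F. (F \<inter> A, F \<inter> B)"]) (use assms(3) in auto)
  have "om_prob A p Q1 * om_prob B p Q2 =
        (\<Sum>(F1, F2)\<in>Pow A \<times> Pow B. (if Q1 F1 then ?w A F1 else 0) * (if Q2 F2 then ?w B F2 else 0))"
    by (simp add: om_prob_def sum_product sum.cartesian_product)
  also have "\<dots> = (\<Sum>(F1, F2)\<in>Pow A \<times> Pow B.
                    if Q1 ((F1 \<union> F2) \<inter> A) \<and> Q2 ((F1 \<union> F2) \<inter> B) then ?w (A \<union> B) (F1 \<union> F2) else 0)"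
  proof (intro sum.cong refl, clarify)
    fix F1 F2 assume "F1 \<subseteq> A" "F2 \<subseteq> B"
    moreover from this assms(3) have "(F1 \<union> F2) \<inter> A = F1" "(F1 \<union> F2) \<inter> B = F2" by auto
    ultimately show "(if Q1 F1 then ?w A F1 else 0) * (if Q2 F2 then ?w B F2 else 0) =
        (if Q1 ((F1 \<union> F2) \<inter> A) \<and> Q2 ((F1 \<union> F2) \<inter> B) then ?w (A \<union> B) (F1 \<union> F2) else 0)"
      using w by simp
  qed
  also have "\<dots> = om_prob (A \<union> B) p (\<lambda>F. Q1 (F \<inter> A) \<and> Q2 (F \<inter> B))"
    unfolding om_prob_def using sum.reindex_bij_betw[OF bij] by (simp add: case_prod_unfold)
  finally show ?thesis ..
qed

lemma om_prob_Ball_disjoint_family: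
  assumes "finite V'" "finite D" "\<And>v. v \<in> D \<Longrightarrow> B v \<subseteq> V'" "disjoint_family_on B D"
  shows "om_prob V' p (\<lambda>F. \<forall>v\<in>D. Q v (F \<inter> B v)) = (\<Prod>v\<in>D. om_prob (B v) p (Q v))"
  using assms(2,1,3,4)
proof (induction D arbitrary: V' rule: finite_induct)
  case empty
  then show ?case by (simp add: om_prob_True)
next
  case (insert a D)
  let ?W = "V' - B a"
  have disj: "B v \<inter> B a = {}" and sub: "B v \<subseteq> V'" if "v \<in> D" for v
    using that insert.hyps(2) insert.prems(2,3) unfolding disjoint_family_on_def by (metis insertCI)+
  have "om_prob V' p (\<lambda>F. \<forall>v\<in>insert a D. Q v (F \<inter> B v))
      = om_prob (B a \<union> ?W) p (\<lambda>F. Q a (F \<inter> B a) \<and> (\<lambda>G. \<forall>v\<in>D. Q v (G \<inter> B v)) (F \<inter> ?W))"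
  proof -
    have "B a \<union> ?W = V'" using insert.prems by auto
    moreover have "F \<inter> ?W \<inter> B v = F \<inter> B v" if "v \<in> D" for F v
      using disj[OF that] sub[OF that] by auto
    ultimately show ?thesis by simp
  qed
  also have "\<dots> = om_prob (B a) p (Q a) * om_prob ?W p (\<lambda>G. \<forall>v\<in>D. Q v (G \<inter> B v))"
    using insert.prems by (intro om_prob_Un_disjoint) (auto intro: finite_subset)
  also have "om_prob ?W p (\<lambda>G. \<forall>v\<in>D. Q v (G \<inter> B v)) = (\<Prod>v\<in>D. om_prob (B v) p (Q v))"
    using insert.prems disj sub by (intro insert.IH) (auto simp: disjoint_family_on_def)
  finally show ?case using insert.hyps by simp
qed

lemma om_prob_superset:
  assumes "finite V'" "S \<subseteq> V'"
  shows "om_prob V' p (\<lambda>F. S \<subseteq> F) = p ^ card S"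
proof -
  have "finite S" using assms finite_subset by auto
  have single: "om_prob {x} p (\<lambda>G. x \<in> G) = p" for x :: 'a
  proof -
    have "Pow {x} = {{}, {x}}" by auto
    then show ?thesis by (simp add: om_prob_def)
  qed
  have "om_prob V' p (\<lambda>F. S \<subseteq> F) = om_prob V' p (\<lambda>F. \<forall>x\<in>S. x \<in> F \<inter> {x})"
    by (rule om_prob_cong) auto
  also have "\<dots> = (\<Prod>x\<in>S. p)"
    using assms \<open>finite S\<close> single
    by (subst om_prob_Ball_disjoint_family) (auto simp: disjoint_family_on_def)
  finally show ?thesis using \<open>finite S\<close> by simp
qed

lemma knows_run'_Suc_iff:
  "snd (run' A E P l env F om (Suc t) c) \<longleftrightarrow> snd (run' A E P l env F om t c) \<and>
     (\<forall>u. (u, fst c) \<in> E \<longrightarrow> (\<exists>d. fst d = u \<and> (d, c) \<in> reinf_edges E P l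
        \<and> snd (run' A E P l env F om t d) \<and> \<not> (d \<in> F \<and> om t d c)))"
  by (simp add: Let_def)

lemma run'_correct_if_knows:
  "snd (run' A E P l env F om t c) \<Longrightarrow> fst (run' A E P l env F om t c) = run A E env t (fst c)"
proof (induction t arbitrary: c)
  case 0
  then show ?case by simp
next
  case (Suc t)
  define st where "st = run' A E P l env F om t"
  define delivered where
    "delivered d \<longleftrightarrow> (d, c) \<in> reinf_edges E P l \<and> snd (st d) \<and> (d \<in> F \<longrightarrow> \<not> om t d c)" for d
  define sender where "sender u = (SOME d. fst d = u \<and> delivered d)" for u
  have knows: "snd (st c)" and senders: "\<forall>u. (u, fst c) \<in> E \<longrightarrow> (\<exists>d. fst d = u \<and> delivered d)"
    using Suc.prems unfolding knows_run'_Suc_iff st_def delivered_def by blast+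
  \<comment> \<open>Whichever delivering copy is chosen, it knows, so it holds the state of its original.\<close>
  have sender: "fst (sender u) = u" "fst (st (sender u)) = run A E env t u" if "(u, fst c) \<in> E" for u
  proof -
    have "fst (sender u) = u \<and> delivered (sender u)"
      unfolding sender_def using senders that by (metis (mono_tags, lifting) someI_ex)
    then show "fst (sender u) = u" "fst (st (sender u)) = run A E env t u"
      using Suc.IH unfolding st_def delivered_def by auto
  qed
  have "run' A E P l env F om (Suc t) c =
     (a_update A (fst c) (a_input A (fst c) (fst (st c)) (env t (fst c)))
        (\<lambda>u. if (u, fst c) \<in> E
              then a_send A (fst (sender u)) (a_input A (fst (sender u)) (fst (st (sender u)))
                     (env t (fst (sender u)))) (fst c)
              else None), True)"
    using knows senders unfolding st_def delivered_def sender_def by (simp add: Let_def)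
  also have "\<dots> = (run A E env (Suc t) (fst c), True)"
    using Suc.IH[OF knows[unfolded st_def]] sender by (auto simp: st_def Let_def intro!: arg_cong[where f="a_update A _ _"])
  finally show ?case by simp
qed

lemma knows_along_fault_free_selection:
  assumes EV: "E \<subseteq> V \<times> V"
    and fault_free: "\<And>v. v \<in> V \<Longrightarrow> (v, \<sigma> v) \<notin> F"
    and linked: "\<And>u v. (u, v) \<in> E \<Longrightarrow> ((u, \<sigma> u), (v, \<sigma> v)) \<in> reinf_edges E P l"
    and "v \<in> V"
  shows "snd (run' A E P l env F om t (v, \<sigma> v))"
  using \<open>v \<in> V\<close>
proof (induction t arbitrary: v)
  case 0
  then show ?case by simp
next
  case (Suc t)
  have "\<exists>d. fst d = u \<and> (d, (v, \<sigma> v)) \<in> reinf_edges E P l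
          \<and> snd (run' A E P l env F om t d) \<and> \<not> (d \<in> F \<and> om t d (v, \<sigma> v))"
    if "(u, v) \<in> E" for u
  proof -
    have "u \<in> V" using that EV by auto
    then show ?thesis
      using Suc.IH fault_free linked[OF that] by (intro exI[of _ "(u, \<sigma> u)"]) auto
  qed
  then show ?case
    unfolding knows_run'_Suc_iff fst_conv using Suc by blast
qed

lemma simulates_if_fault_free_selection:
  assumes "E \<subseteq> V \<times> V"
    and "\<And>v. v \<in> V \<Longrightarrow> \<sigma> v \<in> {1..l} \<and> (v, \<sigma> v) \<notin> F"
    and "\<And>u v. (u, v) \<in> E \<Longrightarrow> ((u, \<sigma> u), (v, \<sigma> v)) \<in> reinf_edges E P l"
  shows "simulates A V E P l env F om"
  unfolding simulates_def
proof
  fix v assume "v \<in> V"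
  then have knows: "snd (run' A E P l env F om t (v, \<sigma> v))" for t
    using assms by (intro knows_along_fault_free_selection) auto
  then have "fst (run' A E P l env F om t (v, \<sigma> v)) = run A E env t v" for t
    using run'_correct_if_knows by fastforce
  with knows show "\<exists>i\<in>{1..l}. \<forall>t. snd (run' A E P l env F om t (v, i))
                              \<and> fst (run' A E P l env F om t (v, i)) = run A E env t v"
    using assms(2) \<open>v \<in> V\<close> by blast
qed

definition correct_copy_in_every_region :: "'v set set \<Rightarrow> nat \<Rightarrow> ('v \<times> nat) set \<Rightarrow> bool" where
  "correct_copy_in_every_region P l F \<longleftrightarrow> (\<forall>X\<in>P. \<exists>i\<in>{1..l}. \<forall>x\<in>X. (x, i) \<notin> F)"

lemma simulates_if_correct_copy_in_every_region:
  assumes gp: "graph_part V E P" and correct: "correct_copy_in_every_region P l F"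
  shows "simulates A V E P l env F om"
proof -
  have EV: "E \<subseteq> V \<times> V" and part: "partition_on V P"
    using gp by (auto simp: graph_part_def)
  obtain idx where idx: "\<And>X. X \<in> P \<Longrightarrow> idx X \<in> {1..l} \<and> (\<forall>x\<in>X. (x, idx X) \<notin> F)"
    using correct unfolding correct_copy_in_every_region_def by metis
  define region where "region v = (THE X. X \<in> P \<and> v \<in> X)" for v
  have unique: "X = Y" if "X \<in> P" "Y \<in> P" "v \<in> X" "v \<in> Y" for X Y v
    using partition_onD2[OF part] that by (metis disjnt_iff pairwiseD)
  have region_eq: "region v = X" if "X \<in> P" "v \<in> X" for X v
    unfolding region_def using that unique by (intro the_equality) blast+
  have region: "region v \<in> P \<and> v \<in> region v" if "v \<in> V" for v
    using that partition_onD1[OF part] region_eq by blast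
  show ?thesis
  proof (rule simulates_if_fault_free_selection[where \<sigma>="\<lambda>v. idx (region v)"])
    show "E \<subseteq> V \<times> V" by (fact EV)
    show "idx (region v) \<in> {1..l} \<and> (v, idx (region v)) \<notin> F" if "v \<in> V" for v
      using idx region[OF that] by blast
    show "((u, idx (region u)), (v, idx (region v))) \<in> reinf_edges E P l" if "(u, v) \<in> E" for u v
    proof -
      have "u \<in> V" "v \<in> V" using that EV by auto
      then have "idx (region u) \<in> {1..l}" "idx (region v) \<in> {1..l}"
        using idx region by blast+
      moreover have "idx (region u) = idx (region v)" if "same_region P u v"
        using that region_eq unfolding same_region_def by metis
      ultimately show ?thesis
        unfolding reinf_edges_def using \<open>(u, v) \<in> E\<close> by blast
    qed
  qed
qed

lemma not_simulates_if_all_copies_silent: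
  assumes "(v, w) \<in> E" "w \<in> V" "{v} \<times> {1..l} \<subseteq> F"
  shows "\<not> simulates A V E P l env F (\<lambda>t d c. True)"
proof
  assume "simulates A V E P l env F (\<lambda>t d c. True)"
  then obtain i where "snd (run' A E P l env F (\<lambda>t d c. True) 1 (w, i))"
    using assms(2) unfolding simulates_def by blast
  then obtain d where d: "fst d = v" "(d, (w, i)) \<in> reinf_edges E P l" and "d \<notin> F"
    using assms(1) unfolding One_nat_def knows_run'_Suc_iff by auto
  have "d \<in> {v} \<times> {1..l}"
    using d unfolding reinf_edges_def by auto
  with assms(3) have "d \<in> F" by (rule subsetD)
  with \<open>d \<notin> F\<close> show False by simp
qed

lemma om_prob_no_correct_copy_in_some_region_le:
  fixes V :: "'v set"
  assumes "finite V" "partition_on V P" "0 \<le> p" "p \<le> 1"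
  shows "om_prob (V \<times> {1..l}) p (\<lambda>F. \<not> correct_copy_in_every_region P l F)
           \<le> (\<Sum>X\<in>P. real (card X) ^ l) * p ^ l"
proof -
  let ?L = "{1..l}"
  have finP: "finite P" using assms(1,2) by (rule finite_elements)
  have XV: "X \<subseteq> V" if "X \<in> P" for X
    using that partition_onD1[OF assms(2)] by blast
  then have finX: "finite X" if "X \<in> P" for X
    using that assms(1) finite_subset by blast
  \<comment> \<open>If no index i has all of X \<times> {i} correct, pick a faulty copy (g i, i) for every i:
    these l copies form one of the card X ^ l sets S (X, g).\<close>
  define J where "J = Sigma P (\<lambda>X. ?L \<rightarrow>\<^sub>E X)"
  define S :: "'v set \<times> (nat \<Rightarrow> 'v) \<Rightarrow> ('v \<times> nat) set"
    where "S = (\<lambda>(X, g). (\<lambda>i. (g i, i)) ` ?L)"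
  have finJ: "finite J"
    unfolding J_def using finP finX by (auto intro!: finite_PiE)
  have blocked: "\<exists>j\<in>J. S j \<subseteq> F" if "\<not> correct_copy_in_every_region P l F" for F
  proof -
    obtain X where "X \<in> P" and "\<forall>i\<in>?L. \<exists>x\<in>X. (x, i) \<in> F"
      using \<open>\<not> correct_copy_in_every_region P l F\<close> unfolding correct_copy_in_every_region_def
      by blast
    then obtain g where g: "X \<in> P" "\<forall>i\<in>?L. g i \<in> X \<and> (g i, i) \<in> F"
      by metis
    then have "(X, restrict g ?L) \<in> J" "S (X, restrict g ?L) \<subseteq> F"
      by (auto simp: J_def S_def)
    then show ?thesis by blast
  qed
  have S_sub: "S j \<subseteq> V \<times> ?L" if "j \<in> J" for j
    using that XV unfolding J_def S_def by (fastforce simp: PiE_def Pi_def)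
  have card_S: "card (S j) = l" for j
    unfolding S_def by (auto simp: card_image inj_on_def split: prod.split)
  have card_J: "card J = (\<Sum>X\<in>P. card X ^ l)"
    unfolding J_def using finP finX by (simp add: card_SigmaI card_PiE finite_PiE)
  have "om_prob (V \<times> ?L) p (\<lambda>F. \<not> correct_copy_in_every_region P l F)
          \<le> om_prob (V \<times> ?L) p (\<lambda>F. \<exists>j\<in>J. S j \<subseteq> F)"
    using assms(3,4) blocked by (intro om_prob_mono) auto
  also have "\<dots> \<le> (\<Sum>j\<in>J. om_prob (V \<times> ?L) p (\<lambda>F. S j \<subseteq> F))"
    using assms(3,4) finJ by (rule om_prob_Bex_le)
  also have "\<dots> = (\<Sum>j\<in>J. p ^ l)"
    using assms(1) S_sub card_S by (intro sum.cong) (auto simp: om_prob_superset)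
  also have "\<dots> = (\<Sum>X\<in>P. real (card X) ^ l) * p ^ l"
    using card_J by (simp add: sum_distrib_right)
  finally show ?thesis .
qed

lemma sum_card_power_le_partition:
  assumes "finite V" "partition_on V P"
  shows "(\<Sum>X\<in>P. real (card X) ^ (f + 1)) \<le> real (card V) * real (max_region P) ^ f"
proof -
  have finP: "finite P" using assms by (rule finite_elements)
  have finX: "finite X" if "X \<in> P" for X
    using that partition_onD1[OF assms(2)] assms(1) by (meson Union_upper finite_subset)
  have "(\<Sum>X\<in>P. real (card X) ^ (f + 1)) \<le> (\<Sum>X\<in>P. real (card X) * real (max_region P) ^ f)"
  proof (intro sum_mono)
    fix X assume "X \<in> P"
    then have "card X \<le> max_region P"
      unfolding max_region_def using finP by simp
    then show "real (card X) ^ (f + 1) \<le> real (card X) * real (max_region P) ^ f"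
      by (simp add: mult_left_mono power_mono)
  qed
  also have "\<dots> = real (card V) * real (max_region P) ^ f"
    using product_partition[OF assms(2) finX] by (simp add: sum_distrib_right)
  finally show ?thesis .
qed

lemma om_prob_simulates_ge:
  assumes "graph_part V E P" "0 \<le> p" "p \<le> 1"
  shows "1 - real (card V) * real (max_region P) ^ f * p ^ (f + 1)
           \<le> om_prob (V \<times> {1..f + 1}) p (\<lambda>F. \<forall>om. simulates A V E P (f + 1) env F om)"
proof -
  let ?correct = "correct_copy_in_every_region P (f + 1)"
  have fin: "finite V" and part: "partition_on V P"
    using assms(1) by (auto simp: graph_part_def)
  have "om_prob (V \<times> {1..f + 1}) p (\<lambda>F. \<not> ?correct F)
          \<le> (\<Sum>X\<in>P. real (card X) ^ (f + 1)) * p ^ (f + 1)"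
    by (rule om_prob_no_correct_copy_in_some_region_le[OF fin part assms(2,3)])
  also have "\<dots> \<le> real (card V) * real (max_region P) ^ f * p ^ (f + 1)"
    using sum_card_power_le_partition[OF fin part] assms(2) by (intro mult_right_mono) simp_all
  finally have "om_prob (V \<times> {1..f + 1}) p (\<lambda>F. \<not> ?correct F)
                  \<le> real (card V) * real (max_region P) ^ f * p ^ (f + 1)" .
  moreover have "om_prob (V \<times> {1..f + 1}) p ?correct
                   \<le> om_prob (V \<times> {1..f + 1}) p (\<lambda>F. \<forall>om. simulates A V E P (f + 1) env F om)"
    using assms simulates_if_correct_copy_in_every_region by (intro om_prob_mono) auto
  ultimately show ?thesis
    using om_prob_not[of "V \<times> {1..f + 1}" p ?correct] fin by simp
qed

lemma om_prob_not_simulates_ge: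
  assumes "graph_part V E P" "0 \<le> p" "p \<le> 1"
  shows "1 - (1 - p ^ l) ^ card {v \<in> V. \<exists>w. (v, w) \<in> E}
           \<le> om_prob (V \<times> {1..l}) p (\<lambda>F. \<not> simulates A V E P l env F (\<lambda>t d c. True))"
proof -
  let ?L = "{1..l}" and ?D = "{v \<in> V. \<exists>w. (v, w) \<in> E}"
  have fin: "finite V" and EV: "E \<subseteq> V \<times> V"
    using assms(1) by (auto simp: graph_part_def)
  have row: "om_prob ({v} \<times> ?L) p (\<lambda>G. \<not> {v} \<times> ?L \<subseteq> G) = 1 - p ^ l" for v
    by (simp add: om_prob_not om_prob_superset card_cartesian_product)
  have "om_prob (V \<times> ?L) p (\<lambda>F. \<not> (\<exists>v\<in>?D. {v} \<times> ?L \<subseteq> F))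
          = om_prob (V \<times> ?L) p (\<lambda>F. \<forall>v\<in>?D. \<not> {v} \<times> ?L \<subseteq> F \<inter> ({v} \<times> ?L))"
    by (rule om_prob_cong) blast
  also have "\<dots> = (\<Prod>v\<in>?D. om_prob ({v} \<times> ?L) p (\<lambda>G. \<not> {v} \<times> ?L \<subseteq> G))"
    using fin by (intro om_prob_Ball_disjoint_family) (auto simp: disjoint_family_on_def)
  also have "\<dots> = (1 - p ^ l) ^ card ?D"
    by (simp only: row prod_constant)
  finally have "om_prob (V \<times> ?L) p (\<lambda>F. \<exists>v\<in>?D. {v} \<times> ?L \<subseteq> F) = 1 - (1 - p ^ l) ^ card ?D"
    using om_prob_not[of "V \<times> ?L" p "\<lambda>F. \<exists>v\<in>?D. {v} \<times> ?L \<subseteq> F"] fin by simp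
  moreover have "om_prob (V \<times> ?L) p (\<lambda>F. \<exists>v\<in>?D. {v} \<times> ?L \<subseteq> F)
                   \<le> om_prob (V \<times> ?L) p (\<lambda>F. \<not> simulates A V E P l env F (\<lambda>t d c. True))"
  proof (rule om_prob_mono[OF assms(2,3)])
    fix F assume "\<exists>v\<in>?D. {v} \<times> ?L \<subseteq> F"
    then obtain v w where "(v, w) \<in> E" "{v} \<times> ?L \<subseteq> F" by blast
    moreover from this have "w \<in> V" using EV by auto
    ultimately show "\<not> simulates A V E P l env F (\<lambda>t d c. True)"
      by (intro not_simulates_if_all_copies_silent)
  qed
  ultimately show ?thesis by simp
qed

lemma powr_minus_inverse_power:
  fixes x :: real
  assumes "x > 0" "l > 0"
  shows "(x powr (- 1 / real l)) ^ l = 1 / x"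
proof -
  have "(x powr (- 1 / real l)) ^ l = x powr (real l * (- 1 / real l))"
    using assms(1) by (intro powr_power) simp
  also have "\<dots> = x powr (- 1)"
    using assms(2) by simp
  finally show ?thesis
    using assms(1) by (simp add: powr_minus_divide)
qed

lemma eventually_nonempty_if_card_at_top:
  assumes "filterlim (\<lambda>m. card (V m)) at_top sequentially"
  shows "eventually (\<lambda>m. V m \<noteq> {}) sequentially"
proof -
  have "eventually (\<lambda>m. card (V m) \<ge> 1) sequentially"
    using assms by (simp add: filterlim_at_top)
  then show ?thesis
    by eventually_elim auto
qed

lemma min_max_region_bounds:
  assumes "graph_part V E P" "V \<noteq> {}"
  shows "1 \<le> min_region P" "min_region P \<le> max_region P"
proof -
  have fin: "finite V" and part: "partition_on V P"
    using assms(1) by (auto simp: graph_part_def)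
  have finP: "finite P" using fin part by (rule finite_elements)
  obtain X where "X \<in> P"
    using assms(2) partition_onD1[OF part] by blast
  have "1 \<le> card X" if "X \<in> P" for X
    using that partition_onD1[OF part] partition_onD3[OF part] fin
    by (metis One_nat_def Suc_leI Union_upper card_gt_0_iff finite_subset)
  with finP \<open>X \<in> P\<close> show "1 \<le> min_region P"
    unfolding min_region_def by (subst Min_ge_iff) auto
  have "min_region P \<le> card X" "card X \<le> max_region P"
    unfolding min_region_def max_region_def using finP \<open>X \<in> P\<close> by simp_all
  then show "min_region P \<le> max_region P" by simp
qed

lemma om_prob_simulates_tendsto_1:
  fixes V :: "nat \<Rightarrow> 'v set" and p :: "nat \<Rightarrow> real"
  assumes gp: "\<And>m. graph_part (V m) (E m) (P m)"
    and n_lim: "filterlim (\<lambda>m. card (V m)) at_top sequentially"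
    and p_range: "\<And>m. 0 \<le> p m \<and> p m \<le> 1"
    and p_small: "p \<in> o(\<lambda>m. (real (card (V m)) / real (min_region (P m))) powr (- 1 / real (f + 1))
                        / real (max_region (P m)))"
  shows "(\<lambda>m. om_prob (V m \<times> {1..f + 1}) (p m)
            (\<lambda>F. \<forall>om. simulates (A m) (V m) (E m) (P m) (f + 1) (env m) F om)) \<longlonglongrightarrow> 1"
proof -
  define n where "n m = real (card (V m))" for m
  define r where "r m = real (min_region (P m))" for m
  define R where "R m = real (max_region (P m))" for m
  define q where "q m = (n m / r m) powr (- 1 / real (f + 1)) / R m" for m
  define bound where "bound m = n m * R m ^ f * p m ^ (f + 1)" for m
  have "eventually (\<lambda>m. n m * R m ^ f * q m ^ (f + 1) = r m / R m \<and> r m \<le> R m \<and> 0 < r m) sequentially"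
    using eventually_nonempty_if_card_at_top[OF n_lim]
  proof eventually_elim
    case (elim m)
    then have "1 \<le> r m" "r m \<le> R m" "0 < n m"
      using min_max_region_bounds[OF gp] gp unfolding r_def R_def n_def
      by (auto simp: card_gt_0_iff graph_part_def)
    moreover from this have "((n m / r m) powr (- 1 / real (f + 1))) ^ (f + 1) = r m / n m"
      using powr_minus_inverse_power[of "n m / r m" "f + 1"] by simp
    ultimately show ?case
      unfolding q_def by (simp add: power_divide power_add field_simps)
  qed
  then have "eventually (\<lambda>m. norm (n m * R m ^ f * q m ^ (f + 1)) \<le> 1 * norm (1::real)) sequentially"
    by eventually_elim simp
  then have q_bounded: "(\<lambda>m. n m * R m ^ f * q m ^ (f + 1)) \<in> O(\<lambda>_. 1)"
    by (rule bigoI)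
  have "(\<lambda>m. p m ^ (f + 1)) \<in> o(\<lambda>m. q m ^ (f + 1))"
    using p_small unfolding q_def n_def r_def R_def by (intro landau_o.small_power) auto
  then have "bound \<in> o(\<lambda>m. n m * R m ^ f * q m ^ (f + 1))"
    unfolding bound_def by (rule landau_o.small.mult_left)
  then have "bound \<in> o(\<lambda>_. 1)"
    using q_bounded by (rule landau_o.small_big_trans)
  then have "bound \<longlonglongrightarrow> 0"
    using smalloD_tendsto by fastforce
  then have lower: "(\<lambda>m. 1 - bound m) \<longlonglongrightarrow> 1"
    using tendsto_diff[of "\<lambda>_. 1" 1 sequentially bound 0] by simp
  show ?thesis
  proof (rule tendsto_sandwich[OF _ _ lower tendsto_const])
    show "eventually (\<lambda>m. 1 - bound m \<le> om_prob (V m \<times> {1..f + 1}) (p m)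
            (\<lambda>F. \<forall>om. simulates (A m) (V m) (E m) (P m) (f + 1) (env m) F om)) sequentially"
      unfolding bound_def n_def R_def using p_range by (intro always_eventually allI om_prob_simulates_ge gp) auto
    show "eventually (\<lambda>m. om_prob (V m \<times> {1..f + 1}) (p m)
            (\<lambda>F. \<forall>om. simulates (A m) (V m) (E m) (P m) (f + 1) (env m) F om) \<le> 1) sequentially"
      using gp p_range by (simp add: graph_part_def om_prob_le_1)
  qed
qed

lemma om_prob_not_simulates_tendsto_1:
  fixes V :: "nat \<Rightarrow> 'v set" and p :: "nat \<Rightarrow> real"
  assumes gp: "\<And>m. graph_part (V m) (E m) (P m)"
    and n_lim: "filterlim (\<lambda>m. card (V m)) at_top sequentially"
    and p_range: "\<And>m. 0 \<le> p m \<and> p m \<le> 1"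
    and senders_linear: "(\<lambda>m. real (card {v \<in> V m. \<exists>w. (v, w) \<in> E m})) \<in> \<Omega>(\<lambda>m. real (card (V m)))"
    and p_large: "p \<in> \<omega>(\<lambda>m. real (card (V m)) powr (- 1 / real l))"
    and "l > 0"
  shows "(\<lambda>m. om_prob (V m \<times> {1..l}) (p m)
            (\<lambda>F. \<not> simulates (A m) (V m) (E m) (P m) l (env m) F (\<lambda>t d c. True))) \<longlonglongrightarrow> 1"
proof -
  define n where "n m = real (card (V m))" for m
  define D where "D m = real (card {v \<in> V m. \<exists>w. (v, w) \<in> E m})" for m
  define x where "x m = p m ^ l * D m" for m
  have "(\<lambda>m. p m ^ l) \<in> \<omega>(\<lambda>m. (n m powr (- 1 / real l)) ^ l)"
    using p_large \<open>l > 0\<close> unfolding n_def by (rule landau_omega.small_power)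
  then have "x \<in> \<omega>(\<lambda>m. (n m powr (- 1 / real l)) ^ l * n m)"
    using senders_linear unfolding x_def D_def n_def by (rule landau_omega.small_big_mult)
  also have "eventually (\<lambda>m. (n m powr (- 1 / real l)) ^ l * n m = 1) sequentially"
    using eventually_nonempty_if_card_at_top[OF n_lim]
  proof eventually_elim
    case (elim m)
    then have "n m > 0"
      unfolding n_def using gp by (simp add: graph_part_def card_gt_0_iff)
    then show ?case
      using powr_minus_inverse_power[OF _ \<open>l > 0\<close>] by simp
  qed
  then have "\<omega>(\<lambda>m. (n m powr (- 1 / real l)) ^ l * n m) = \<omega>(\<lambda>_. 1)"
    by (rule landau_omega.small.cong)
  finally have "filterlim (\<lambda>m. norm (x m / 1)) at_top sequentially"
    by (intro smallomegaD_filterlim_at_top_norm) auto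
  moreover have "norm (x m / 1) = x m" for m
    unfolding x_def D_def using p_range[of m] by simp
  ultimately have "filterlim x at_top sequentially"
    by simp
  then have "(\<lambda>m. exp (- x m)) \<longlonglongrightarrow> 0"
    by (intro filterlim_compose[OF exp_at_bot]) (simp add: filterlim_uminus_at_bot)
  then have lower: "(\<lambda>m. 1 - exp (- x m)) \<longlonglongrightarrow> 1"
    using tendsto_diff[of "\<lambda>_. 1" 1 sequentially "\<lambda>m. exp (- x m)" 0] by simp
  show ?thesis
  proof (rule tendsto_sandwich[OF _ _ lower tendsto_const])
    show "eventually (\<lambda>m. 1 - exp (- x m) \<le> om_prob (V m \<times> {1..l}) (p m)
            (\<lambda>F. \<not> simulates (A m) (V m) (E m) (P m) l (env m) F (\<lambda>t d c. True))) sequentially"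
    proof (intro always_eventually allI)
      fix m
      have "0 \<le> p m ^ l" "p m ^ l \<le> 1"
        using p_range[of m] by (simp_all add: power_le_one)
      then have "(1 - p m ^ l) ^ card {v \<in> V m. \<exists>w. (v, w) \<in> E m}
                   \<le> exp (- (p m ^ l)) ^ card {v \<in> V m. \<exists>w. (v, w) \<in> E m}"
        using exp_ge_add_one_self[of "- (p m ^ l)"] by (intro power_mono) simp_all
      also have "\<dots> = exp (- x m)"
        unfolding x_def D_def by (simp add: exp_of_nat_mult[symmetric] mult.commute)
      finally have "1 - exp (- x m) \<le> 1 - (1 - p m ^ l) ^ card {v \<in> V m. \<exists>w. (v, w) \<in> E m}"
        by simp
      also have "\<dots> \<le> om_prob (V m \<times> {1..l}) (p m)
            (\<lambda>F. \<not> simulates (A m) (V m) (E m) (P m) l (env m) F (\<lambda>t d c. True))"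
        using p_range[of m] by (intro om_prob_not_simulates_ge gp) auto
      finally show "1 - exp (- x m) \<le> om_prob (V m \<times> {1..l}) (p m)
            (\<lambda>F. \<not> simulates (A m) (V m) (E m) (P m) l (env m) F (\<lambda>t d c. True))" .
    qed
    show "eventually (\<lambda>m. om_prob (V m \<times> {1..l}) (p m)
            (\<lambda>F. \<not> simulates (A m) (V m) (E m) (P m) l (env m) F (\<lambda>t d c. True)) \<le> 1) sequentially"
      using gp p_range by (simp add: graph_part_def om_prob_le_1)
  qed
qed

theorem theorem3:
  fixes f :: nat
  shows
  "(\<forall>(V :: nat \<Rightarrow> 'v set) E P (p :: nat \<Rightarrow> real) (A :: nat \<Rightarrow> ('v,'s,'m,'i) alg) env.
      (\<forall>m. graph_part (V m) (E m) (P m)) \<and>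
      filterlim (\<lambda>m. card (V m)) at_top sequentially \<and>
      (\<forall>m. 0 \<le> p m \<and> p m \<le> 1) \<and>
      p \<in> o(\<lambda>m. (real (card (V m)) / real (min_region (P m))) powr (- 1 / real (f + 1))
                 / real (max_region (P m)))
      \<longrightarrow> ((\<lambda>m. om_prob (V m \<times> {1..f + 1}) (p m)
                 (\<lambda>F. \<forall>om. simulates (A m) (V m) (E m) (P m) (f + 1) (env m) F om))
           \<longlonglongrightarrow> 1))
   \<and>
   (\<forall>(V :: nat \<Rightarrow> 'v set) E P (p :: nat \<Rightarrow> real).
      (\<forall>m. graph_part (V m) (E m) (P m)) \<and>
      filterlim (\<lambda>m. card (V m)) at_top sequentially \<and>
      (\<forall>m. 0 \<le> p m \<and> p m \<le> 1) \<and>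
      (\<lambda>m. real (card {v \<in> V m. \<exists>w. (v, w) \<in> E m})) \<in> \<Omega>(\<lambda>m. real (card (V m))) \<and>
      (\<lambda>m. real (max_region (P m))) \<in> O(\<lambda>_. 1) \<and>
      p \<in> \<omega>(\<lambda>m. real (card (V m)) powr (- 1 / real (f + 1)))
      \<longrightarrow> (\<exists>(A :: nat \<Rightarrow> ('v,'s,'m,'i) alg) env om.
             (\<lambda>m. om_prob (V m \<times> {1..f + 1}) (p m)
                 (\<lambda>F. \<not> simulates (A m) (V m) (E m) (P m) (f + 1) (env m) F (om m)))
             \<longlonglongrightarrow> 1))"
  apply (rule conjI)
  subgoal by (blast intro: om_prob_simulates_tendsto_1)
  subgoal
    \<comment> \<open>Any algorithm and inputs will do, with faulty copies omitting every message.\<close>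
    apply (intro allI impI; elim conjE)
    apply (rule exI, rule exI, rule exI[where x="\<lambda>_ t d c. True"])
    by (rule om_prob_not_simulates_tendsto_1) auto
  done

end
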